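(* Every blocking set of $\operatorname{PG}(2,q)$ with at most $2q$ points contains exactly one minimal blocking set.
   Context: $q$ is a prime power and $\operatorname{PG}(2,q)$ is the incidence structure of the points and lines of $\mathbb{P}^2$ defined over $\mathbb{F}_q$. A blocking set is a set of points of $\operatorname{PG}(2,q)$ meeting every line; it is minimal if no proper subset of it is a blocking set. *)

theory Defs
  imports Main
begin

text \<open>The projective plane PG(2,q) over a finite field 'a with q = CARD('a) elements.
  Vectors of the underlying 3-dimensional space are triples.\<close>

type_synonym 'a vec3 = "'a \<times> 'a \<times> 'a"

definition scale3 :: "'a::field \<Rightarrow> 'a vec3 \<Rightarrow> 'a vec3" where
  "scale3 c v = (case v of (x, y, z) \<Rightarrow> (c * x, c * y, c * z))"

definition dot3 :: "'a::field vec3 \<Rightarrow> 'a vec3 \<Rightarrow> 'a" where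
  "dot3 v w = (case v of (x, y, z) \<Rightarrow> case w of (a, b, c) \<Rightarrow> x * a + y * b + z * c)"

definition proj_point :: "'a::field vec3 \<Rightarrow> 'a vec3 set" where
  "proj_point v = {scale3 c v | c. c \<noteq> 0}"

definition PG_points :: "'a::{finite,field} vec3 set set" where
  "PG_points = {proj_point v | v. v \<noteq> (0, 0, 0)}"

definition PG_line :: "'a::{finite,field} vec3 \<Rightarrow> 'a vec3 set set" where
  "PG_line w = {P \<in> PG_points. \<forall>v\<in>P. dot3 w v = 0}"

definition PG_lines :: "'a::{finite,field} vec3 set set set" where
  "PG_lines = {PG_line w | w. w \<noteq> (0, 0, 0)}"

definition blocking_set :: "'a::{finite,field} vec3 set set \<Rightarrow> bool" where
  "blocking_set B \<longleftrightarrow> B \<subseteq> PG_points \<and> (\<forall>L\<in>PG_lines. B \<inter> L \<noteq> {})"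

definition minimal_blocking_set :: "'a::{finite,field} vec3 set set \<Rightarrow> bool" where
  "minimal_blocking_set B \<longleftrightarrow> blocking_set B \<and> (\<forall>C. C \<subset> B \<longrightarrow> \<not> blocking_set C)"

end

theory Submission
  imports Defs "HOL-Number_Theory.Residues" "HOL-Computational_Algebra.Polynomial"
    "HOL-Library.Product_Plus"
begin

text \<open>A point of a blocking set B is essential if B without it no longer blocks. Essential points
  lie in every blocking subset of B, so B contains exactly one minimal blocking set as soon as its
  essential points block every line. Suppose the line l with coordinates w contains no essential
  point. Then every other line meets B outside l. Normalise the points d of B off l by
  w \<cdot> d = 1 and fix one of them, a. For every nonzero p with a \<cdot> p = 0 the line with
  coordinates p - w avoids a, and a point d of B on it off l satisfies d \<cdot> p = 1. So the
  punctured plane {p \<noteq> 0. a \<cdot> p = 0} is covered by at most 2q - 3 affine planes d \<cdot> p = 1.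
  This is impossible: the polynomial (1 - (a \<cdot> p) ^ (q - 1)) \<Prod>(d \<cdot> p - 1) vanishes
  everywhere except at p = 0, yet has degree below 3(q - 1), so its values over all of
  \<bbbF>_q ^ 3 sum to zero.\<close>

lemma of_nat_card_field_eq_0: "of_nat (card (UNIV :: 'a set)) = (0 :: 'a :: {finite,field})"
  by (simp add: of_nat_eq_0_iff_char_dvd CHAR_dvd_CARD)

lemma card_field_ge_2: "2 \<le> card (UNIV :: 'a :: {finite,field} set)"
proof -
  have "card {0 :: 'a, 1} \<le> card (UNIV :: 'a set)"
    by (rule card_mono) simp_all
  then show ?thesis by simp
qed

lemma field_power_card_minus_1:
  fixes x :: "'a :: {finite,field}"
  assumes "x \<noteq> 0"
  shows "x ^ (card (UNIV :: 'a set) - 1) = 1"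
proof -
  let ?U = "UNIV - {0 :: 'a}"
  have "x ^ card ?U * \<Prod>?U = (\<Prod>y\<in>?U. x * y)"
    by (simp add: prod.distrib)
  also have "\<dots> = \<Prod>?U"
    by (rule prod.reindex_bij_witness[of _ "\<lambda>y. y / x" "\<lambda>y. x * y"]) (use assms in auto)
  finally show ?thesis
    by (simp add: card_Diff_singleton)
qed

lemma sum_powers_field_eq_0:
  assumes "i < card (UNIV :: 'a set) - 1"
  shows "(\<Sum>x\<in>UNIV. x ^ i) = (0 :: 'a :: {finite,field})"
proof (cases "i = 0")
  case True
  then show ?thesis by (simp add: of_nat_card_field_eq_0)
next
  case False
  define P :: "'a poly" where "P = monom 1 i + [:-1:]"
  have deg: "degree P = i"
    using False unfolding P_def by (subst degree_add_eq_left) (simp_all add: degree_monom_eq)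
  have "{x. x ^ i = 1} = {x. poly P x = 0}"
    by (auto simp: P_def poly_monom)
  moreover have "P \<noteq> 0"
    using deg False by auto
  ultimately have "card {x. x ^ i = (1 :: 'a)} \<le> i"
    using card_poly_roots_bound[of P] deg by simp
  then have "card {x. x ^ i = (1 :: 'a)} < card (UNIV - {0 :: 'a})"
    using assms by (simp add: card_Diff_singleton)
  then have "\<not> UNIV - {0} \<subseteq> {x. x ^ i = (1 :: 'a)}"
    by (meson card_mono finite_UNIV finite_subset leD subset_UNIV)
  then obtain c :: 'a where c: "c \<noteq> 0" "c ^ i \<noteq> 1"
    by blast
  have "c ^ i * (\<Sum>x\<in>UNIV. x ^ i) = (\<Sum>x\<in>UNIV. (c * x) ^ i)"
    by (simp add: power_mult_distrib sum_distrib_left)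
  also have "\<dots> = (\<Sum>x\<in>UNIV. x ^ i)"
    by (rule sum.reindex_bij_witness[of _ "\<lambda>y. y / c" "\<lambda>y. c * y"]) (use c in auto)
  finally have "(c ^ i - 1) * (\<Sum>x\<in>UNIV. x ^ i) = 0"
    by (simp add: algebra_simps)
  then show ?thesis using c by simp
qed

definition monom3 :: "nat \<Rightarrow> nat \<Rightarrow> nat \<Rightarrow> 'a::comm_ring_1 vec3 \<Rightarrow> 'a" where
  "monom3 i j k = (\<lambda>(x, y, z). x ^ i * y ^ j * z ^ k)"

lemma monom3_mult: "monom3 i j k p * monom3 i' j' k' p = monom3 (i + i') (j + j') (k + k') p"
  by (cases p) (simp add: monom3_def power_add mult_ac)

text \<open>Functions given by some polynomial of total degree at most \<open>n\<close>; over a finite field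
  such a representation is not unique, so only this upper bound on the degree is meaningful.\<close>
inductive poly3_deg_le :: "nat \<Rightarrow> ('a::comm_ring_1 vec3 \<Rightarrow> 'a) \<Rightarrow> bool" for n where
  monom: "i + j + k \<le> n \<Longrightarrow> poly3_deg_le n (monom3 i j k)"
| add: "poly3_deg_le n f \<Longrightarrow> poly3_deg_le n g \<Longrightarrow> poly3_deg_le n (\<lambda>p. f p + g p)"
| smult: "poly3_deg_le n f \<Longrightarrow> poly3_deg_le n (\<lambda>p. c * f p)"

lemma poly3_deg_le_const: "poly3_deg_le n (\<lambda>_. c)"
  using poly3_deg_le.smult[OF poly3_deg_le.monom[of 0 0 0 n], of c]
  by (simp add: monom3_def split_def)

lemma poly3_deg_le_diff:
  assumes "poly3_deg_le n f" "poly3_deg_le n g"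
  shows "poly3_deg_le n (\<lambda>p. f p - g p)"
proof -
  have "poly3_deg_le n (\<lambda>p. f p + (- 1) * g p)"
    using assms by (intro poly3_deg_le.intros)
  then show ?thesis by simp
qed

lemma poly3_deg_le_mult:
  assumes "poly3_deg_le m f" "poly3_deg_le n g"
  shows "poly3_deg_le (m + n) (\<lambda>p. f p * g p)"
  using assms
proof (induction rule: poly3_deg_le.induct)
  case (monom i j k)
  from monom.prems show ?case
  proof (induction rule: poly3_deg_le.induct)
    case (monom i' j' k')
    then have "poly3_deg_le (m + n) (monom3 (i + i') (j + j') (k + k'))"
      using \<open>i + j + k \<le> m\<close> by (intro poly3_deg_le.monom) simp
    then show ?case by (simp add: monom3_mult)
  next
    case (add g h)
    then show ?case by (simp add: distrib_left poly3_deg_le.add)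
  next
    case (smult g c)
    then show ?case by (simp add: mult.left_commute poly3_deg_le.smult)
  qed
next
  case (add f g)
  then show ?case by (simp add: distrib_right poly3_deg_le.add)
next
  case (smult f c)
  then show ?case by (simp add: mult.assoc poly3_deg_le.smult)
qed

lemma poly3_deg_le_dot3: "poly3_deg_le 1 (dot3 a)"
proof -
  obtain a1 a2 a3 where a: "a = (a1, a2, a3)" by (cases a)
  have "poly3_deg_le 1 (\<lambda>p. a1 * monom3 1 0 0 p + a2 * monom3 0 1 0 p + a3 * monom3 0 0 1 p)"
    by (intro poly3_deg_le.intros) simp_all
  moreover have "dot3 a = (\<lambda>p. a1 * monom3 1 0 0 p + a2 * monom3 0 1 0 p + a3 * monom3 0 0 1 p)"
    by (auto simp: fun_eq_iff a dot3_def monom3_def mult_ac)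
  ultimately show ?thesis by simp
qed

lemma poly3_deg_le_prod:
  assumes "finite R" "\<And>d. d \<in> R \<Longrightarrow> poly3_deg_le n (f d)"
  shows "poly3_deg_le (card R * n) (\<lambda>p. \<Prod>d\<in>R. f d p)"
  using assms
proof (induction rule: finite_induct)
  case empty
  then show ?case by (simp add: poly3_deg_le_const)
next
  case (insert d R)
  then show ?case using poly3_deg_le_mult[of n "f d" "card R * n"] by simp
qed

lemma poly3_deg_le_power: "poly3_deg_le n f \<Longrightarrow> poly3_deg_le (k * n) (\<lambda>p. f p ^ k)"
  by (induction k) (simp_all add: poly3_deg_le_const poly3_deg_le_mult)

lemma sum_UNIV_vec3: "(\<Sum>p\<in>UNIV. f p) = (\<Sum>x\<in>UNIV. \<Sum>y\<in>UNIV. \<Sum>z\<in>UNIV. f (x, y, z))"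
  by (simp add: sum.cartesian_product flip: UNIV_Times_UNIV)

lemma sum_monom3:
  "(\<Sum>p\<in>UNIV. monom3 i j k p) =
    (\<Sum>x\<in>UNIV. x ^ i) * (\<Sum>y\<in>UNIV. y ^ j) * (\<Sum>z\<in>UNIV. (z :: 'a :: comm_ring_1) ^ k)"
proof -
  have "(\<Sum>p\<in>UNIV. monom3 i j k p) =
      (\<Sum>x\<in>UNIV. x ^ i * (\<Sum>y\<in>UNIV. y ^ j * (\<Sum>z\<in>UNIV. (z :: 'a) ^ k)))"
    by (simp add: sum_UNIV_vec3 monom3_def sum_distrib_left mult.assoc)
  also have "\<dots> = (\<Sum>x\<in>UNIV. x ^ i) * (\<Sum>y\<in>UNIV. y ^ j) * (\<Sum>z\<in>UNIV. z ^ k)"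
    by (simp only: sum_distrib_right[symmetric] mult.assoc)
  finally show ?thesis .
qed

lemma sum_poly3_eq_0:
  fixes f :: "'a::{finite,field} vec3 \<Rightarrow> 'a"
  assumes "poly3_deg_le n f" "n < 3 * (card (UNIV :: 'a set) - 1)"
  shows "(\<Sum>p\<in>UNIV. f p) = 0"
  using assms
proof (induction rule: poly3_deg_le.induct)
  case (monom i j k)
  then have "i < card (UNIV :: 'a set) - 1 \<or> j < card (UNIV :: 'a set) - 1
      \<or> k < card (UNIV :: 'a set) - 1"
    by linarith
  then have "(\<Sum>x\<in>UNIV. x ^ i) = (0 :: 'a) \<or> (\<Sum>y\<in>UNIV. y ^ j) = (0 :: 'a)
      \<or> (\<Sum>z\<in>UNIV. z ^ k) = (0 :: 'a)"
    using sum_powers_field_eq_0 by blast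
  then show ?case
    by (auto simp only: sum_monom3 mult_eq_0_iff)
next
  case (add f g)
  then show ?case by (simp add: sum.distrib)
next
  case (smult f c)
  then show ?case by (simp add: sum_distrib_left[symmetric])
qed

lemma punctured_plane_not_covered:
  fixes a :: "'a::{finite,field} vec3"
  assumes "finite R" "card R < 2 * (card (UNIV :: 'a set) - 1)"
  shows "\<exists>p. p \<noteq> (0, 0, 0) \<and> dot3 a p = 0 \<and> (\<forall>d\<in>R. dot3 d p \<noteq> 1)"
proof (rule ccontr)
  assume "\<not> ?thesis"
  then have covered: "\<exists>d\<in>R. dot3 d p = 1" if "p \<noteq> (0, 0, 0)" "dot3 a p = 0" for p
    using that by blast
  define q where "q = card (UNIV :: 'a set)"
  define F where "F p = (\<Prod>d\<in>R. dot3 d p - 1)" for p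
  have q: "2 \<le> q"
    unfolding q_def by (rule card_field_ge_2)
  have indicator: "(1 - dot3 a p ^ (q - 1)) * F p = (if p = (0, 0, 0) then F (0, 0, 0) else 0)"
    for p
  proof (cases "p = (0, 0, 0)")
    case True
    then show ?thesis using q by (simp add: dot3_def)
  next
    case nonzero: False
    show ?thesis
    proof (cases "dot3 a p = 0")
      case True
      then obtain d where "d \<in> R" "dot3 d p = 1"
        using covered nonzero by blast
      then have "F p = 0"
        using \<open>finite R\<close> by (auto simp: F_def)
      then show ?thesis using nonzero by simp
    next
      case False
      then show ?thesis
        using field_power_card_minus_1[OF False] nonzero by (simp add: q_def)
    qed
  qed
  have "F (0, 0, 0) \<noteq> 0"
    using \<open>finite R\<close> by (simp add: F_def dot3_def)
  moreover have "(\<Sum>p\<in>UNIV. (1 - dot3 a p ^ (q - 1)) * F p) = F (0, 0, 0)"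
    unfolding indicator by simp
  moreover have "(\<Sum>p\<in>UNIV. (1 - dot3 a p ^ (q - 1)) * F p) = 0"
  proof (rule sum_poly3_eq_0)
    have "poly3_deg_le ((q - 1) * 1) (\<lambda>p. 1 - dot3 a p ^ (q - 1))"
      by (intro poly3_deg_le_diff poly3_deg_le_const poly3_deg_le_power poly3_deg_le_dot3)
    moreover have "poly3_deg_le (card R * 1) F"
      unfolding F_def
      by (intro poly3_deg_le_prod \<open>finite R\<close> poly3_deg_le_diff poly3_deg_le_dot3 poly3_deg_le_const)
    ultimately show "poly3_deg_le ((q - 1) * 1 + card R * 1) (\<lambda>p. (1 - dot3 a p ^ (q - 1)) * F p)"
      by (rule poly3_deg_le_mult)
    show "(q - 1) * 1 + card R * 1 < 3 * (card (UNIV :: 'a set) - 1)"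
      using assms(2) by (simp add: q_def)
  qed
  ultimately show False by simp
qed

lemma dot3_commute: "dot3 v w = dot3 w v"
  by (cases v; cases w) (simp add: dot3_def algebra_simps)

lemma dot3_scale3: "dot3 w (scale3 c v) = c * dot3 w v"
  by (cases w; cases v) (simp add: dot3_def scale3_def algebra_simps)

lemma dot3_diff_left: "dot3 (p - w) v = dot3 p v - dot3 w v"
  by (cases p; cases w; cases v) (simp add: dot3_def algebra_simps)

lemma scale3_scale3: "scale3 a (scale3 b v) = scale3 (a * b) v"
  by (cases v) (simp add: scale3_def)

lemma proj_point_self: "v \<in> proj_point v"
  unfolding proj_point_def by (rule CollectI, rule exI[of _ 1]) (cases v, simp add: scale3_def)

lemma proj_point_scale3:
  assumes "(c :: 'a :: field) \<noteq> 0"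
  shows "proj_point (scale3 c v) = proj_point v"
proof -
  have "scale3 x (scale3 c v) = scale3 (x * c) v" "scale3 x v = scale3 (x / c) (scale3 c v)" for x
    using assms by (simp_all add: scale3_scale3)
  then show ?thesis
    using assms unfolding proj_point_def by (metis divide_eq_0_iff mult_eq_0_iff)
qed

lemma PG_pointsE:
  assumes "P \<in> PG_points"
  obtains v where "v \<noteq> (0, 0, 0)" "P = proj_point v"
  using assms unfolding PG_points_def by blast

lemma proj_point_in_PG_line_iff:
  assumes "(v :: 'a :: {finite,field} vec3) \<noteq> (0, 0, 0)"
  shows "proj_point v \<in> PG_line u \<longleftrightarrow> dot3 u v = 0"
proof
  show "proj_point v \<in> PG_line u \<Longrightarrow> dot3 u v = 0"
    unfolding PG_line_def using proj_point_self by blast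
next
  assume "dot3 u v = 0"
  moreover have "proj_point v \<in> PG_points"
    unfolding PG_points_def using assms by blast
  ultimately show "proj_point v \<in> PG_line u"
    unfolding PG_line_def proj_point_def by (auto simp: dot3_scale3)
qed

lemma PG_point_normalized_rep:
  assumes "P \<in> PG_points" "P \<notin> PG_line w"
  shows "\<exists>d. proj_point d = P \<and> dot3 w d = 1"
proof -
  obtain v where v: "v \<noteq> (0, 0, 0)" "P = proj_point v"
    using assms(1) by (rule PG_pointsE)
  then have "dot3 w v \<noteq> 0"
    using assms(2) proj_point_in_PG_line_iff by blast
  then have "proj_point (scale3 (1 / dot3 w v) v) = P \<and> dot3 w (scale3 (1 / dot3 w v) v) = 1"
    by (simp add: v(2) proj_point_scale3 dot3_scale3)
  then show ?thesis by blast
qed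

lemma exists_dot3_eq_1:
  assumes "w \<noteq> ((0 :: 'a :: field), 0, 0)"
  shows "\<exists>a. dot3 w a = 1"
proof -
  obtain w1 w2 w3 where w: "w = (w1, w2, w3)" by (cases w)
  consider "w1 \<noteq> 0" | "w2 \<noteq> 0" | "w3 \<noteq> 0"
    using assms w by auto
  then show ?thesis
  proof cases
    case 1
    then show ?thesis by (intro exI[of _ "(1 / w1, 0, 0)"]) (simp add: w dot3_def)
  next
    case 2
    then show ?thesis by (intro exI[of _ "(0, 1 / w2, 0)"]) (simp add: w dot3_def)
  next
    case 3
    then show ?thesis by (intro exI[of _ "(0, 0, 1 / w3)"]) (simp add: w dot3_def)
  qed
qed

definition cross3 :: "'a::comm_ring_1 vec3 \<Rightarrow> 'a vec3 \<Rightarrow> 'a vec3" where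
  "cross3 u v = (case u of (a1, a2, a3) \<Rightarrow> case v of (b1, b2, b3) \<Rightarrow>
     (a2 * b3 - a3 * b2, a3 * b1 - a1 * b3, a1 * b2 - a2 * b1))"

lemma cross3_zero_right: "cross3 u (0, 0, 0) = (0, 0, 0)"
  by (cases u) (simp add: cross3_def)

lemma cross3_eq_0_imp_scale3:
  assumes "cross3 a b = (0, 0, 0)" "a \<noteq> ((0 :: 'a :: field), 0, 0)"
  shows "\<exists>c. b = scale3 c a"
proof -
  obtain a1 a2 a3 where a: "a = (a1, a2, a3)" by (cases a)
  obtain b1 b2 b3 where b: "b = (b1, b2, b3)" by (cases b)
  have e: "a2 * b3 = a3 * b2" "a3 * b1 = a1 * b3" "a1 * b2 = a2 * b1"
    using assms(1) by (auto simp: a b cross3_def)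
  consider "a1 \<noteq> 0" | "a2 \<noteq> 0" | "a3 \<noteq> 0"
    using assms(2) a by auto
  then show ?thesis
  proof cases
    case 1
    then show ?thesis
      using e by (intro exI[of _ "b1 / a1"]) (auto simp: a b scale3_def field_simps ac_simps)
  next
    case 2
    then show ?thesis
      using e by (intro exI[of _ "b2 / a2"]) (auto simp: a b scale3_def field_simps ac_simps)
  next
    case 3
    then show ?thesis
      using e by (intro exI[of _ "b3 / a3"]) (auto simp: a b scale3_def field_simps ac_simps)
  qed
qed

lemma cross3_cross3_orthogonal:
  assumes "dot3 w v = 0" "dot3 u v = 0"
  shows "cross3 (cross3 w u) v = ((0 :: 'a :: field), 0, 0)"
proof -
  obtain v1 v2 v3 where v: "v = (v1, v2, v3)" by (cases v)
  obtain w1 w2 w3 where w: "w = (w1, w2, w3)" by (cases w)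
  obtain u1 u2 u3 where u: "u = (u1, u2, u3)" by (cases u)
  have "cross3 (cross3 w u) v = (u1 * dot3 w v - w1 * dot3 u v,
      u2 * dot3 w v - w2 * dot3 u v, u3 * dot3 w v - w3 * dot3 u v)"
    by (simp add: v w u cross3_def dot3_def algebra_simps)
  then show ?thesis
    using assms by simp
qed

lemma PG_line_Int_PG_line_subsingleton:
  assumes "cross3 w u \<noteq> ((0 :: 'a :: {finite,field}), 0, 0)"
    and "P \<in> PG_line w \<inter> PG_line u" "Q \<in> PG_line w \<inter> PG_line u"
  shows "P = Q"
proof -
  have "P = proj_point (cross3 w u)" if "P \<in> PG_line w \<inter> PG_line u" for P
  proof -
    have "P \<in> PG_points"
      using that unfolding PG_line_def by blast
    then obtain v where v: "v \<noteq> (0, 0, 0)" "P = proj_point v"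
      by (rule PG_pointsE)
    then have "dot3 w v = 0" "dot3 u v = 0"
      using that proj_point_in_PG_line_iff by blast+
    then obtain c where c: "v = scale3 c (cross3 w u)"
      using cross3_eq_0_imp_scale3[OF _ assms(1)] cross3_cross3_orthogonal by blast
    moreover have "c \<noteq> 0"
      using v(1) c by (auto simp: scale3_def split: prod.splits)
    ultimately show ?thesis
      using v(2) proj_point_scale3 by blast
  qed
  then show ?thesis
    using assms(2,3) by blast
qed

lemma blocking_set_superset:
  "blocking_set C \<Longrightarrow> C \<subseteq> C' \<Longrightarrow> C' \<subseteq> PG_points \<Longrightarrow> blocking_set C'"
  unfolding blocking_set_def by blast

definition essential_points :: "'a::{finite,field} vec3 set set \<Rightarrow> 'a vec3 set set" where
  "essential_points B = {P \<in> B. \<not> blocking_set (B - {P})}"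

lemma essential_points_subset:
  assumes "blocking_set B" "M \<subseteq> B" "blocking_set M"
  shows "essential_points B \<subseteq> M"
proof
  fix P
  assume P: "P \<in> essential_points B"
  show "P \<in> M"
  proof (rule ccontr)
    assume "P \<notin> M"
    then have "blocking_set (B - {P})"
      using assms blocking_set_superset[of M "B - {P}"] unfolding blocking_set_def by blast
    then show False
      using P unfolding essential_points_def by blast
  qed
qed

lemma ex1_minimal_blocking_subset:
  assumes "blocking_set B" "blocking_set (essential_points B)"
  shows "\<exists>!M. M \<subseteq> B \<and> minimal_blocking_set M"
proof (rule ex1I[of _ "essential_points B"])
  have "essential_points B \<subseteq> B"
    unfolding essential_points_def by blast
  moreover have "\<not> blocking_set C" if "C \<subset> essential_points B" for C
    using that essential_points_subset[OF assms(1), of C] \<open>essential_points B \<subseteq> B\<close> by blast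
  ultimately show "essential_points B \<subseteq> B \<and> minimal_blocking_set (essential_points B)"
    using assms(2) unfolding minimal_blocking_set_def by blast
next
  fix M
  assume M: "M \<subseteq> B \<and> minimal_blocking_set M"
  then have "essential_points B \<subseteq> M"
    using essential_points_subset[OF assms(1)] unfolding minimal_blocking_set_def by blast
  then show "M = essential_points B"
    using M assms(2) unfolding minimal_blocking_set_def by blast
qed

lemma blocking_set_meets_line_off:
  assumes B: "blocking_set B" "essential_points B \<inter> PG_line w = {}"
    and wu: "cross3 w u \<noteq> (0, 0, 0)"
  shows "\<exists>P \<in> B \<inter> PG_line u. P \<notin> PG_line w"
proof (rule ccontr)
  assume "\<not> ?thesis"
  then have on_w: "B \<inter> PG_line u \<subseteq> PG_line w"
    by blast
  have "u \<noteq> (0, 0, 0)"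
    using wu cross3_zero_right by blast
  then have line: "PG_line u \<in> PG_lines"
    unfolding PG_lines_def by blast
  then obtain Z where Z: "Z \<in> B \<inter> PG_line u"
    using B(1) unfolding blocking_set_def by blast
  then have "blocking_set (B - {Z})"
    using B(2) on_w unfolding essential_points_def by blast
  then obtain W where W: "W \<in> (B - {Z}) \<inter> PG_line u"
    using line unfolding blocking_set_def by blast
  then have "W = Z"
    using Z on_w PG_line_Int_PG_line_subsingleton[OF wu] by blast
  then show False
    using W by blast
qed

lemma two_le_card_Int_PG_line:
  assumes B: "blocking_set B" "essential_points B \<inter> PG_line w = {}"
    and w: "w \<noteq> (0, 0, 0)"
  shows "2 \<le> card (B \<inter> PG_line w)"
proof -
  have line: "PG_line w \<in> PG_lines"
    unfolding PG_lines_def using w by blast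
  then obtain Z where Z: "Z \<in> B \<inter> PG_line w"
    using B(1) unfolding blocking_set_def by blast
  then have "blocking_set (B - {Z})"
    using B(2) unfolding essential_points_def by blast
  then obtain W where W: "W \<in> B \<inter> PG_line w" "W \<noteq> Z"
    using line unfolding blocking_set_def by blast
  then have "card {Z, W} \<le> card (B \<inter> PG_line w)"
    using Z by (intro card_mono) simp_all
  then show ?thesis
    using W(2) by simp
qed

lemma blocking_set_covers_punctured_plane:
  fixes B :: "'a::{finite,field} vec3 set set"
  assumes B: "blocking_set B" "essential_points B \<inter> PG_line w = {}"
    and w: "w \<noteq> (0, 0, 0)" and a: "dot3 w a = 1"
    and p: "p \<noteq> (0, 0, 0)" "dot3 a p = 0"
  obtains P where "P \<in> B - PG_line w" "P \<noteq> proj_point a"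
    "\<And>d. d \<in> P \<Longrightarrow> dot3 w d = 1 \<Longrightarrow> dot3 d p = 1"
proof -
  define u where "u = p - w"
  have ua: "dot3 u a = - 1"
    using p(2) a dot3_commute[of p a] by (simp add: u_def dot3_diff_left)
  have "cross3 w u \<noteq> (0, 0, 0)"
  proof
    assume "cross3 w u = (0, 0, 0)"
    then obtain c where c: "u = scale3 c w"
      using cross3_eq_0_imp_scale3 w by blast
    then have "c = - 1"
      using ua a dot3_commute[of u a] dot3_commute[of w a] by (simp add: dot3_scale3)
    then have "p = (0, 0, 0)"
      using c unfolding u_def by (cases p; cases w) (simp add: scale3_def)
    then show False
      using p(1) by simp
  qed
  then obtain P where P: "P \<in> B" "P \<in> PG_line u" "P \<notin> PG_line w"
    using blocking_set_meets_line_off[OF B] by blast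
  have "P \<noteq> proj_point a"
  proof
    assume "P = proj_point a"
    then have "dot3 u a = 0"
      using P(2) proj_point_self unfolding PG_line_def by blast
    then show False
      using ua by simp
  qed
  moreover have "dot3 d p = 1" if "d \<in> P" "dot3 w d = 1" for d
  proof -
    have "dot3 u d = 0"
      using P(2) that(1) unfolding PG_line_def by blast
    then show ?thesis
      using that(2) dot3_commute[of d p] by (simp add: u_def dot3_diff_left)
  qed
  ultimately show ?thesis
    using P that by blast
qed

lemma essential_points_meet_line:
  fixes B :: "'a::{finite,field} vec3 set set"
  assumes B: "blocking_set B" "card B \<le> 2 * card (UNIV :: 'a set)"
    and w: "w \<noteq> (0, 0, 0)"
  shows "essential_points B \<inter> PG_line w \<noteq> {}"
proof
  assume no_essential: "essential_points B \<inter> PG_line w = {}"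
  define q where "q = card (UNIV :: 'a set)"
  define D where "D = B - PG_line w"
  have "card D = card B - card (B \<inter> PG_line w)"
    unfolding D_def by (rule card_Diff_subset_Int) simp
  then have "card D \<le> 2 * q - 2"
    using B(2) two_le_card_Int_PG_line[OF B(1) no_essential w] by (simp add: q_def)
  have "D \<subseteq> PG_points"
    using B(1) unfolding D_def blocking_set_def by blast
  then have "\<forall>P\<in>D. \<exists>d. proj_point d = P \<and> dot3 w d = 1"
    using PG_point_normalized_rep unfolding D_def by blast
  then obtain rep where rep: "\<forall>P\<in>D. proj_point (rep P) = P \<and> dot3 w (rep P) = 1"
    by (rule bchoice[THEN exE])
  obtain a where a: "dot3 w a = 1" "D \<noteq> {} \<Longrightarrow> proj_point a \<in> D"
  proof (cases "D = {}")
    case True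
    then show ?thesis using exists_dot3_eq_1[OF w] that by blast
  next
    case False
    then obtain P0 where "P0 \<in> D"
      by blast
    then show ?thesis
      using rep by (intro that[of "rep P0"]) auto
  qed
  define R where "R = rep ` (D - {proj_point a})"
  have "card (D - {proj_point a}) < 2 * (q - 1)"
    using \<open>card D \<le> 2 * q - 2\<close> card_field_ge_2[where 'a = 'a] a(2)
    by (cases "D = {}") (auto simp: q_def card_Diff_singleton)
  then have "card R < 2 * (q - 1)"
    unfolding R_def using card_image_le[of "D - {proj_point a}" rep] by simp
  then obtain p where p: "p \<noteq> (0, 0, 0)" "dot3 a p = 0" "\<forall>d\<in>R. dot3 d p \<noteq> 1"
    using punctured_plane_not_covered[of R a] by (auto simp: R_def q_def)
  obtain P where P: "P \<in> D" "P \<noteq> proj_point a"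
    and on_line: "\<And>d. d \<in> P \<Longrightarrow> dot3 w d = 1 \<Longrightarrow> dot3 d p = 1"
    using blocking_set_covers_punctured_plane[OF B(1) no_essential w a(1) p(1,2)]
    unfolding D_def by blast
  have "rep P \<in> R"
    unfolding R_def using P by blast
  moreover have "dot3 (rep P) p = 1"
    using rep P(1) proj_point_self on_line by metis
  ultimately show False
    using p(3) by blast
qed

lemma blocking_set_essential_points:
  fixes B :: "'a::{finite,field} vec3 set set"
  assumes "blocking_set B" "card B \<le> 2 * card (UNIV :: 'a set)"
  shows "blocking_set (essential_points B)"
  unfolding blocking_set_def
proof (intro conjI ballI)
  show "essential_points B \<subseteq> PG_points"
    using assms(1) unfolding blocking_set_def essential_points_def by blast
next
  fix L :: "'a vec3 set set"
  assume "L \<in> PG_lines"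
  then obtain w where "w \<noteq> (0, 0, 0)" "L = PG_line w"
    unfolding PG_lines_def by blast
  then show "essential_points B \<inter> L \<noteq> {}"
    using essential_points_meet_line[OF assms] by blast
qed

theorem mainTheorem14:
  fixes B :: "('a::{finite,field}) vec3 set set"
  assumes "blocking_set B"
    and "card B \<le> 2 * card (UNIV :: 'a set)"
  shows "\<exists>!M. M \<subseteq> B \<and> minimal_blocking_set M"
  using assms by (intro ex1_minimal_blocking_subset blocking_set_essential_points)

end
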